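(* Assume RH and let $T$ be large. For $0<k\le 1/2$, $$\sum_{0<\gamma\le T}\zeta'(\rho)\mathcal{N}(\rho,k-1)\mathcal{N}(\overline{\rho},k) \ll_k \Big(\sum_{0<\gamma\le T}|\zeta'(\rho)|^{2k}\Big)^{1/2}\Big(\sum_{0<\gamma\le T}|\zeta'(\rho)|^2|\mathcal{N}(\rho,k-1)|^2\Big)^{(1-k)/2}\Big(\sum_{0<\gamma\le T}\prod_{i=1}^{\mathcal{J}}\big(|\mathcal{N}_i(\rho,k)|^2+|\mathcal{Q}_i(\rho,k)|^{2r_k}\big)\Big)^{k/2}.$$ For $k>1/2$, $$\sum_{0<\gamma\le T}\zeta'(\rho)\mathcal{N}(\rho,k-1)\mathcal{N}(\overline{\rho},k) \ll_k \Big(\sum_{0<\gamma\le T}|\zeta'(\rho)|^{2k}\Big)^{\frac{1}{2k}}\Big(\sum_{0<\gamma\le T}\prod_{j=1}^{\mathcal{J}}\big(|\mathcal{N}_j(\rho,k)|^2+|\mathcal{Q}_j(\rho,k)|^{2r_k}\big)\Big)^{\frac{2k-1}{2k}}.$$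
   Context: Under RH every nontrivial zero of $\zeta$ is written $\rho=\tfrac12+i\gamma$, $\gamma\in\mathbb{R}$; sums over $0<\gamma\le T$ run over such zeros with multiplicity. Fix real $k>0$, a large number $M$ depending only on $k$, and a large number $T$. Set $\alpha_0=0$, $\alpha_j = 20^{j-1}/(\log\log T)^2$ for $j\ge1$, and $\mathcal{J}=1+\max\{j:\alpha_j\le 10^{-M}\}$. Let $I_j=(T^{\alpha_{j-1}},T^{\alpha_j}]$. Put $E_\ell(x)=\sum_{i=0}^{\lceil \ell\rceil} x^i/i!$. For $1\le j\le \mathcal{J}$, real $\alpha$ and complex $s$ define $\mathcal{P}_j(s)=\sum_{p\in I_j}p^{-s}$ ($p$ prime), $\mathcal{N}_j(s,\alpha)=E_{e^2k\alpha_j^{-3/4}}(\alpha\mathcal{P}_j(s))$, $\mathcal{N}(s,\alpha)=\prod_{j=1}^{\mathcal{J}}\mathcal{N}_j(s,\alpha)$, and $\mathcal{Q}_j(s,k)=\big(64\max(2,k+3/2)\mathcal{P}_j(s)/\lceil e^2k\alpha_j^{-3/4}\rceil\big)^{\lceil e^2k\alpha_j^{-3/4}\rceil}$. Set $r_k=2+\lceil 1/k\rceil$ if $0<k\le1/2$ and $r_k=1+\lceil 2k/(2k-1)\rceil$ if $k>1/2$. *)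

theory Defs
  imports "HOL-Complex_Analysis.Complex_Analysis" "HOL-Computational_Algebra.Primes"
begin

text \<open>Riemann zeta function: the unique function holomorphic on the complex plane minus 1
  that equals the Dirichlet series sum of n to the power -s for Re s > 1
  (value at the pole s = 1 fixed to 0 by convention, to make the function unique).\<close>
definition zeta :: "complex \<Rightarrow> complex" where
  "zeta = (THE f. f holomorphic_on (- {1}) \<and> f 1 = 0 \<and>
       (\<forall>s. 1 < Re s \<longrightarrow> (\<lambda>n. 1 / (of_nat (Suc n)) powr s) sums f s))"

definition RH :: bool where
  "RH \<longleftrightarrow> (\<forall>s. zeta s = 0 \<and> 0 < Re s \<and> Re s < 1 \<longrightarrow> Re s = 1/2)"

definition zero_sum :: "real \<Rightarrow> (complex \<Rightarrow> 'a::semiring_1) \<Rightarrow> 'a" where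
  "zero_sum T f = (\<Sum>\<rho>\<in>{\<rho>. zeta \<rho> = 0 \<and> 0 < Re \<rho> \<and> Re \<rho> < 1 \<and> 0 < Im \<rho> \<and> Im \<rho> \<le> T}.
                     of_nat (nat (zorder zeta \<rho>)) * f \<rho>)"

definition alpha :: "real \<Rightarrow> nat \<Rightarrow> real" where
  "alpha T j = (if j = 0 then 0 else 20 ^ (j - 1) / (ln (ln T))^2)"

definition JJ :: "real \<Rightarrow> real \<Rightarrow> nat" where
  "JJ T M = 1 + Max {j. alpha T j \<le> 10 powr (-M)}"

definition PP :: "real \<Rightarrow> nat \<Rightarrow> complex \<Rightarrow> complex" where
  "PP T j s = (\<Sum>p\<in>{p::nat. prime p \<and> T powr alpha T (j - 1) < real p \<and> real p \<le> T powr alpha T j}.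
                 (of_nat p) powr (- s))"

definition EE :: "real \<Rightarrow> complex \<Rightarrow> complex" where
  "EE l x = (\<Sum>i = 0..nat \<lceil>l\<rceil>. x ^ i / fact i)"

definition ell :: "real \<Rightarrow> real \<Rightarrow> nat \<Rightarrow> real" where
  "ell k T j = exp 2 * k * alpha T j powr (-3/4)"

definition NNj :: "real \<Rightarrow> real \<Rightarrow> nat \<Rightarrow> complex \<Rightarrow> real \<Rightarrow> complex" where
  "NNj T k j s a = EE (ell k T j) (of_real a * PP T j s)"

definition NN :: "real \<Rightarrow> real \<Rightarrow> real \<Rightarrow> complex \<Rightarrow> real \<Rightarrow> complex" where
  "NN T M k s a = (\<Prod>j = 1..JJ T M. NNj T k j s a)"

definition QQ :: "real \<Rightarrow> real \<Rightarrow> nat \<Rightarrow> complex \<Rightarrow> complex" where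
  "QQ T k j s = (of_real (64 * max 2 (k + 3/2)) * PP T j s / of_int \<lceil>ell k T j\<rceil>)
                  ^ nat \<lceil>ell k T j\<rceil>"

definition rk :: "real \<Rightarrow> nat" where
  "rk k = (if k \<le> 1/2 then 2 + nat \<lceil>1 / k\<rceil> else 1 + nat \<lceil>2 * k / (2 * k - 1)\<rceil>)"

end

theory Submission
  imports Defs
begin

(* Each factor of N(rho, k-1) N(cnj rho, k) is compared with |N_j(rho, k)|^2 + |Q_j(rho, k)|^(2 r_k):
   when |P_j(rho)| is small compared with the truncation length l_j, the truncated exponentials
   are within a factor 1 + O(exp(-l_j/2)) of the true exponentials, and the exponents are chosen
   so that exp((k-1) Re z)^P exp(k Re z)^R = exp(k Re z)^2; when |P_j(rho)| is large, both
   truncations are bounded by a power of |Q_j(rho, k)|.  Since l_j grows geometrically in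
   J - j, the losses multiply to a constant depending only on k and M.  Hoelder's inequality
   (preceded by Cauchy-Schwarz when k <= 1/2) then turns this pointwise bound into the
   inequality for the sums over zeros.  Nothing about the zeros is used beyond the nonnegativity
   of their multiplicities. *)

lemma Hoelder_inequality_weighted_sum:
  fixes w f g :: "'a \<Rightarrow> real"
  assumes fin: "finite I" and w: "\<And>i. i \<in> I \<Longrightarrow> w i \<ge> 0"
    and f: "\<And>i. i \<in> I \<Longrightarrow> f i \<ge> 0" and g: "\<And>i. i \<in> I \<Longrightarrow> g i \<ge> 0"
    and p: "p > 1" and q: "q > 1" and pq: "1/p + 1/q = 1"
  shows "(\<Sum>i\<in>I. w i * (f i * g i)) \<le>
     (\<Sum>i\<in>I. w i * f i powr p) powr (1/p) * (\<Sum>i\<in>I. w i * g i powr q) powr (1/q)"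
proof -
  define X where "X = (\<Sum>i\<in>I. w i * f i powr p)"
  define Y where "Y = (\<Sum>i\<in>I. w i * g i powr q)"
  have X0: "X \<ge> 0" and Y0: "Y \<ge> 0" unfolding X_def Y_def using w by (auto intro: sum_nonneg)
  show ?thesis
  proof (cases "X = 0 \<or> Y = 0")
    case True
    then have "\<forall>i\<in>I. w i * f i = 0 \<or> w i * g i = 0"
      using w p q by (auto simp: X_def Y_def sum_nonneg_eq_0_iff[OF fin])
    then have "(\<Sum>i\<in>I. w i * (f i * g i)) = 0"
      by (intro sum.neutral) (auto simp: algebra_simps)
    then show ?thesis using X0 Y0 unfolding X_def[symmetric] Y_def[symmetric] by simp
  next
    case False
    with X0 Y0 have Xp: "X > 0" and Yp: "Y > 0" by auto
    define a where "a i = f i / X powr (1/p)" for i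
    define b where "b i = g i / Y powr (1/q)" for i
    have "(\<Sum>i\<in>I. w i * (a i * b i)) \<le> (\<Sum>i\<in>I. w i * (a i powr p / p + b i powr q / q))"
      using w f g Xp Yp p q pq
      by (intro sum_mono mult_left_mono Youngs_inequality) (auto simp: a_def b_def)
    also have "\<dots> = (1/p) * ((\<Sum>i\<in>I. w i * f i powr p) / X)
        + (1/q) * ((\<Sum>i\<in>I. w i * g i powr q) / Y)"
      using f g Xp Yp p q
      by (simp add: a_def b_def sum_divide_distrib sum_distrib_left sum.distrib
          powr_divide powr_powr algebra_simps)
    also have "\<dots> = 1" using Xp Yp pq unfolding X_def[symmetric] Y_def[symmetric] by simp
    finally have "(\<Sum>i\<in>I. w i * (a i * b i)) \<le> 1" .
    moreover have "(\<Sum>i\<in>I. w i * (a i * b i))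
        = (\<Sum>i\<in>I. w i * (f i * g i)) / (X powr (1/p) * Y powr (1/q))"
      by (simp add: a_def b_def sum_divide_distrib)
    ultimately show ?thesis using Xp Yp
      by (simp add: X_def[symmetric] Y_def[symmetric] divide_le_eq mult_ac)
  qed
qed

section \<open>Truncated exponential series\<close>

lemma exp_nat_le_power_3: "exp (real n) \<le> 3 ^ n"
proof -
  have "exp (real n) = exp 1 ^ n" using exp_of_nat_mult[of n "1::real"] by simp
  also have "\<dots> \<le> 3 ^ n" using exp_le by (intro power_mono) auto
  finally show ?thesis .
qed

definition exp_partial :: "nat \<Rightarrow> 'a::real_normed_field \<Rightarrow> 'a" where
  "exp_partial n w = (\<Sum>i=0..n. w^i / fact i)"

lemma exp_series_sums: "(\<lambda>i. w^i / fact i) sums exp (w::'a::{real_normed_field,banach})"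
proof -
  have "(\<lambda>i. w^i / fact i) = (\<lambda>i. w^i /\<^sub>R fact i)"
    by (simp add: scaleR_conv_of_real divide_inverse mult.commute)
  then show ?thesis using exp_converges by simp
qed

lemma exp_partial_le_exp:
  assumes "(x::real) \<ge> 0"
  shows "exp_partial n x \<le> exp x"
  using sum_le_suminf[of "\<lambda>i. x^i / fact i" "{0..n}"] exp_series_sums[of x] assms
  by (auto simp: exp_partial_def sums_iff)

lemma norm_exp_partial_le:
  fixes w :: "'a::real_normed_field"
  assumes "norm w \<le> U"
  shows "norm (exp_partial n w) \<le> exp_partial n U"
proof -
  have "norm (exp_partial n w) \<le> (\<Sum>i=0..n. norm (w^i / fact i))"
    unfolding exp_partial_def by (rule norm_sum)
  also have "\<dots> \<le> exp_partial n U"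
    unfolding exp_partial_def
  proof (rule sum_mono)
    fix i
    have "norm w ^ i \<le> U ^ i" using assms by (intro power_mono) auto
    then show "norm (w^i / fact i) \<le> U^i / fact i"
      by (simp add: norm_divide norm_power divide_right_mono)
  qed
  finally show ?thesis .
qed

lemma norm_exp_minus_exp_partial_le:
  fixes w :: "'a::{real_normed_field,banach}"
  assumes n: "n \<ge> 1" and wn: "norm w \<le> n"
  shows "norm (exp w - exp_partial n w) \<le> (norm w / n)^(Suc n) * exp n"
proof -
  define u where "u = norm w"
  have u0: "u \<ge> 0" by (simp add: u_def)
  have nn: "real n > 0" using n by simp
  have tail: "(\<lambda>i. x^(i + Suc n) / fact (i + Suc n)) sums (exp x - exp_partial n x)"
    for x :: "'b::{real_normed_field,banach}"
  proof -
    have "{0..n} = {..<Suc n}" by auto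
    then show ?thesis
      using sums_split_initial_segment[OF exp_series_sums[of x], of "Suc n"]
      by (simp add: exp_partial_def)
  qed
  have "norm (exp w - exp_partial n w) = norm (\<Sum>i. w^(i + Suc n) / fact (i + Suc n))"
    using tail[of w] by (simp add: sums_iff)
  also have "\<dots> \<le> (\<Sum>i. u^(i + Suc n) / fact (i + Suc n))"
  proof -
    have "(\<lambda>i. norm (w^(i + Suc n) / fact (i + Suc n))) = (\<lambda>i. u^(i + Suc n) / fact (i + Suc n))"
      by (simp only: norm_divide norm_power norm_fact u_def)
    then show ?thesis
      using summable_norm[of "\<lambda>i. w^(i + Suc n) / fact (i + Suc n)"] tail[of u]
      by (simp add: sums_iff)
  qed
  also have "\<dots> \<le> (\<Sum>i. (u / n)^(Suc n) * (real n^(i + Suc n) / fact (i + Suc n)))"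
  proof (rule suminf_le)
    fix i
    have "u^(i + Suc n) = (u/n)^(i + Suc n) * real n ^ (i + Suc n)"
      using nn by (simp add: power_divide)
    also have "\<dots> \<le> (u/n)^(Suc n) * real n ^ (i + Suc n)"
      using wn u0 nn by (intro mult_right_mono power_decreasing) (auto simp: u_def)
    finally show "u^(i + Suc n) / fact (i + Suc n)
        \<le> (u / n)^(Suc n) * (real n^(i + Suc n) / fact (i + Suc n))"
      by (simp add: divide_right_mono)
  next
    show "summable (\<lambda>i. u^(i + Suc n) / fact (i + Suc n))" using tail[of u] by (simp add: sums_iff)
    show "summable (\<lambda>i. (u / n)^(Suc n) * (real n^(i + Suc n) / fact (i + Suc n)))"
      using tail[of "real n"] by (intro summable_mult) (simp add: sums_iff)
  qed
  also have "\<dots> = (u / n)^(Suc n) * (exp n - exp_partial n (real n))"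
    using sums_mult[OF tail[of "real n"], of "(u / n)^(Suc n)"] by (simp add: sums_iff)
  also have "\<dots> \<le> (u / n)^(Suc n) * exp n"
    using u0 by (intro mult_left_mono) (auto simp: exp_partial_def intro!: sum_nonneg)
  finally show ?thesis by (simp add: u_def)
qed

lemma exp_partial_le_power:
  fixes U :: real
  assumes n: "n \<ge> 1" and U: "U \<ge> n / exp 2"
  shows "exp_partial n U \<le> (exp 3 * U / n)^n"
proof -
  have nn: "real n > 0" using n by simp
  define m where "m = exp 2 * U / n"
  have m1: "m \<ge> 1" using U nn by (simp add: m_def field_simps)
  have U0: "U \<ge> 0" using U nn by (smt (verit) divide_nonneg_pos exp_gt_zero)
  have "exp_partial n U \<le> (\<Sum>i=0..n. m^n * (real n^i / fact i))"
    unfolding exp_partial_def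
  proof (rule sum_mono)
    fix i assume i: "i \<in> {0..n}"
    have "1 * U \<le> exp 2 * U" using U0 by (intro mult_right_mono) auto
    then have "U / n \<le> m" using nn by (simp add: m_def divide_right_mono)
    then have "(U/n)^i \<le> m^i" using U0 nn by (intro power_mono) auto
    also have "\<dots> \<le> m^n" using m1 i by (intro power_increasing) auto
    finally have "U^i \<le> m^n * real n^i" using nn by (simp add: power_divide field_simps)
    then show "U^i / fact i \<le> m^n * (real n^i / fact i)" by (simp add: divide_right_mono)
  qed
  also have "\<dots> = m^n * exp_partial n (real n)" by (simp add: exp_partial_def sum_distrib_left)
  also have "\<dots> \<le> m^n * exp n" using m1 by (intro mult_left_mono exp_partial_le_exp) auto
  also have "\<dots> = (m * exp 1)^n"
    using exp_of_nat_mult[of n "1::real"] by (simp add: power_mult_distrib)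
  also have "m * exp 1 = exp 3 * U / n" by (simp add: m_def exp_add[symmetric])
  finally show ?thesis .
qed

lemma norm_exp_partial_minus_exp_le:
  assumes n: "n \<ge> 1" and w: "cmod w \<le> n / exp 2"
  shows "cmod (exp_partial n w - exp w) \<le> exp (- (n/2)) * exp (Re w)"
proof -
  define u where "u = cmod w"
  have nn: "real n > 0" using n by simp
  have "real n / exp 2 \<le> real n / 2"
    using exp_ge_add_one_self[of "2::real"] nn by (intro divide_left_mono) auto
  then have un: "u \<le> n / 2" using w unfolding u_def by linarith
  have "cmod w \<le> n" using un nn by (simp add: u_def)
  then have "cmod (exp_partial n w - exp w) \<le> (u / n)^(Suc n) * exp n"
    using norm_exp_minus_exp_partial_le[OF n] by (simp add: norm_minus_commute u_def)
  also have "\<dots> \<le> exp (-2) ^ Suc n * exp n"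
  proof (intro mult_right_mono power_mono)
    show "u / n \<le> exp (-2)" using w nn by (simp add: u_def exp_minus field_simps)
  qed (use nn in \<open>auto simp: u_def\<close>)
  also have "\<dots> = exp (- 2 * (n + 1) + n)"
    by (simp add: exp_add[symmetric] exp_of_nat_mult[symmetric] algebra_simps)
  also have "\<dots> \<le> exp (- (n/2) + Re w)"
    using un abs_Re_le_cmod[of w] by (simp add: u_def)
  finally show ?thesis by (simp add: exp_add[symmetric])
qed

lemma norm_exp_partial_bounds:
  assumes "n \<ge> 1" and "cmod w \<le> n / exp 2"
  shows "cmod (exp_partial n w) \<le> (1 + exp (- (n/2))) * exp (Re w)"
    and "cmod (exp_partial n w) \<ge> (1 - exp (- (n/2))) * exp (Re w)"
  using norm_exp_partial_minus_exp_le[OF assms] norm_triangle_ineq2[of "exp_partial n w" "exp w"]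
    norm_triangle_ineq3[of "exp_partial n w" "exp w"]
  by (auto simp: algebra_simps)

lemma one_plus_powr_div_one_minus_sq_le_exp:
  fixes e S :: real
  assumes e0: "0 \<le> e" and e1: "e \<le> 2/3" and S: "S \<ge> 0"
  shows "(1 + e) powr S / (1 - e)^2 \<le> exp ((S + 6) * e)"
proof -
  have "(1 + e) powr S \<le> exp e powr S"
    using e0 S by (intro powr_mono2) auto
  then have num: "(1 + e) powr S \<le> exp (S * e)" by (simp add: exp_powr_real mult.commute)
  have "1 \<le> (1 - e) * (1 + 3 * e)"
    using mult_right_mono[OF e1, of "3 * e"] e0 by (simp add: algebra_simps)
  then have "1 / (1 - e) \<le> 1 + 3 * e" using e1 by (subst divide_le_eq) (auto simp: mult_ac)
  also have "\<dots> \<le> exp (3 * e)" by (rule exp_ge_add_one_self)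
  finally have "(1 / (1 - e))^2 \<le> exp (3 * e) ^ 2" using e1 by (intro power_mono) auto
  then have den: "1 / (1 - e)^2 \<le> exp (6 * e)"
    by (simp add: power_divide exp_of_nat_mult[of 2, symmetric])
  have "(1 + e) powr S / (1 - e)^2 = (1 + e) powr S * (1 / (1 - e)^2)" by simp
  also have "\<dots> \<le> exp (S * e) * exp (6 * e)" using num den by (intro mult_mono) auto
  also have "\<dots> = exp ((S + 6) * e)" by (simp add: exp_add[symmetric] algebra_simps)
  finally show ?thesis .
qed

lemma exp_partial_pair_le_small:
  fixes k P R :: real and z :: complex
  assumes k: "k > 0" and n: "n \<ge> 1" and P: "P \<ge> 0" and R: "R \<ge> 0"
    and PR: "P * (k - 1) + R * k = 2 * k" and z: "cmod z \<le> n / (exp 2 * max 1 k)"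
  defines "\<epsilon> \<equiv> exp (- (n/2))"
  shows "cmod (exp_partial n (of_real (k - 1) * z)) powr P * cmod (exp_partial n (of_real k * z)) powr R
     \<le> (1 + \<epsilon>) powr (P + R) / (1 - \<epsilon>)^2 * cmod (exp_partial n (of_real k * z))^2"
proof -
  define x where "x = Re z"
  define a where "a = exp_partial n (of_real (k - 1) * z)"
  define b where "b = exp_partial n (of_real k * z)"
  have e1: "\<epsilon> < 1" using n by (simp add: \<epsilon>_def)
  have small: "cmod (of_real t * z) \<le> n / exp 2" if "\<bar>t\<bar> \<le> max 1 k" for t
  proof -
    have "cmod (of_real t * z) \<le> max 1 k * cmod z"
      using that by (simp add: norm_mult mult_right_mono)
    also have "\<dots> \<le> n / exp 2" using z by (simp add: field_simps)
    finally show ?thesis .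
  qed
  have "\<bar>k - 1\<bar> \<le> max 1 k" "\<bar>k\<bar> \<le> max 1 k" using k by auto
  note za = small[OF this(1)] and zb = small[OF this(2)]
  have ua: "cmod a \<le> (1 + \<epsilon>) * exp ((k - 1) * x)"
    using norm_exp_partial_bounds(1)[OF n za] by (simp add: a_def \<epsilon>_def x_def)
  have ub: "cmod b \<le> (1 + \<epsilon>) * exp (k * x)"
    using norm_exp_partial_bounds(1)[OF n zb] by (simp add: b_def \<epsilon>_def x_def)
  have lb: "(1 - \<epsilon>) * exp (k * x) \<le> cmod b"
    using norm_exp_partial_bounds(2)[OF n zb] by (simp add: b_def \<epsilon>_def x_def)
  have "cmod a powr P * cmod b powr R
      \<le> ((1 + \<epsilon>) * exp ((k - 1) * x)) powr P * ((1 + \<epsilon>) * exp (k * x)) powr R"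
    using ua ub P R by (intro mult_mono powr_mono2) auto
  also have "\<dots> = (1 + \<epsilon>) powr (P + R) * exp ((k - 1) * x * P + k * x * R)"
    by (simp add: \<epsilon>_def powr_mult exp_powr_real powr_add exp_add)
  also have "(k - 1) * x * P + k * x * R = x * (P * (k - 1) + R * k)" by (simp add: algebra_simps)
  also have "exp (x * (P * (k - 1) + R * k)) = exp (k * x) ^ 2"
    by (simp add: PR exp_of_nat_mult[symmetric] mult_ac)
  also have "(1 + \<epsilon>) powr (P + R) * exp (k * x) ^ 2 \<le> (1 + \<epsilon>) powr (P + R) * (cmod b / (1 - \<epsilon>))^2"
    using lb e1 by (intro mult_left_mono power_mono) (auto simp: le_divide_eq mult.commute)
  finally show ?thesis by (simp add: a_def b_def power_divide)
qed

(* 27 \<ge> exp 3 absorbs the factor lost in exp_partial_le_power. *)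
lemma exp_partial_pair_le_large:
  fixes k P R c :: real and z :: complex
  assumes k: "k > 0" and n: "n \<ge> 1" and P: "P \<ge> 0" and R: "R \<ge> 0"
    and PRr: "P + R \<le> 2 * r" and c: "27 * max 1 k \<le> c" and z: "n / (exp 2 * max 1 k) < cmod z"
  shows "cmod (exp_partial n (of_real (k - 1) * z)) powr P * cmod (exp_partial n (of_real k * z)) powr R
     \<le> cmod ((of_real c * z / of_nat n)^n)^(2 * r)"
proof -
  define m where "m = max 1 k"
  define y where "y = c * cmod z / n"
  have nn: "real n > 0" using n by simp
  have m1: "m \<ge> 1" by (simp add: m_def)
  have "exp 2 * m \<le> 9 * m" "exp 3 * m \<le> 27 * m"
    using exp_nat_le_power_3[of 2] exp_nat_le_power_3[of 3] m1 by (auto intro: mult_right_mono)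
  then have e2: "exp 2 * m \<le> c" and e3: "exp 3 * m \<le> c" using c m1 by (auto simp: m_def)
  have U: "n / exp 2 \<le> m * cmod z"
    using z m1 by (simp add: m_def field_simps)
  have y1: "1 \<le> y"
  proof -
    have "real n \<le> exp 2 * m * cmod z" using z m1 by (simp add: m_def field_simps)
    also have "\<dots> \<le> c * cmod z" using e2 by (intro mult_right_mono) auto
    finally show ?thesis using nn by (simp add: y_def le_divide_eq)
  qed
  have bound: "cmod (exp_partial n (of_real t * z)) \<le> y^n" if "\<bar>t\<bar> \<le> m" for t
  proof -
    have "cmod (of_real t * z) \<le> m * cmod z" using that by (simp add: norm_mult mult_right_mono)
    then have "cmod (exp_partial n (of_real t * z)) \<le> exp_partial n (m * cmod z)"
      by (rule norm_exp_partial_le)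
    also have "\<dots> \<le> (exp 3 * (m * cmod z) / n)^n" by (rule exp_partial_le_power[OF n U])
    also have "\<dots> \<le> y^n"
    proof (intro power_mono)
      have "exp 3 * (m * cmod z) \<le> c * cmod z"
        using e3 by (metis mult.assoc mult_right_mono norm_ge_zero)
      then show "exp 3 * (m * cmod z) / n \<le> y" using nn by (simp add: y_def divide_right_mono)
    qed (use m1 in simp)
    finally show ?thesis .
  qed
  have yn: "y^n \<ge> 1" using y1 by (simp add: one_le_power)
  have "cmod (exp_partial n (of_real (k - 1) * z)) powr P * cmod (exp_partial n (of_real k * z)) powr R
      \<le> (y^n) powr P * (y^n) powr R"
  proof -
    have "\<bar>k - 1\<bar> \<le> m" "\<bar>k\<bar> \<le> m" using k by (auto simp: m_def)
    note bounds = bound[OF this(1)] bound[OF this(2)]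
    show ?thesis using bounds P R by (intro mult_mono powr_mono2) auto
  qed
  also have "\<dots> = (y^n) powr (P + R)" by (simp add: powr_add)
  also have "\<dots> \<le> (y^n) powr (real (2 * r))" using yn PRr by (intro powr_mono) auto
  also have "\<dots> = (y^n)^(2 * r)" using yn by (intro powr_realpow) auto
  also have "y^n = cmod ((of_real c * z / of_nat n)^n)"
    using c m1 by (simp add: y_def m_def norm_power norm_divide norm_mult)
  finally show ?thesis .
qed

lemma exp_partial_pair_le:
  fixes k P R c :: real and z :: complex
  assumes k: "k > 0" and n: "n \<ge> 1" and P: "P \<ge> 0" and R: "R \<ge> 0"
    and PR: "P * (k - 1) + R * k = 2 * k" and PRr: "P + R \<le> 2 * r" and c: "27 * max 1 k \<le> c"
  shows "cmod (exp_partial n (of_real (k - 1) * z)) powr P * cmod (exp_partial n (of_real k * z)) powr R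
     \<le> exp ((P + R + 6) * exp (- (n/2))) *
        (cmod (exp_partial n (of_real k * z))^2 + cmod ((of_real c * z / of_nat n)^n)^(2 * r))"
proof -
  define \<epsilon> where "\<epsilon> = exp (- (real n / 2))"
  define E where "E = exp ((P + R + 6) * \<epsilon>)"
  have E1: "1 \<le> E" using P R by (simp add: E_def \<epsilon>_def)
  have "\<epsilon> \<le> exp (- (1/2))" using n by (simp add: \<epsilon>_def)
  also have "\<dots> \<le> 2/3"
    using exp_ge_add_one_self[of "1/2::real"] by (simp add: exp_minus field_simps)
  finally have F: "(1 + \<epsilon>) powr (P + R) / (1 - \<epsilon>)^2 \<le> E"
    unfolding E_def using P R by (intro one_plus_powr_div_one_minus_sq_le_exp) (auto simp: \<epsilon>_def)
  define a where "a = cmod (exp_partial n (of_real k * z))^2"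
  define b where "b = cmod ((of_real c * z / of_nat n)^n)^(2 * r)"
  have ab: "0 \<le> a" "0 \<le> b" by (simp_all add: a_def b_def)
  show ?thesis
  proof (cases "cmod z \<le> n / (exp 2 * max 1 k)")
    case True
    from exp_partial_pair_le_small[OF k n P R PR True]
    have "cmod (exp_partial n (of_real (k - 1) * z)) powr P * cmod (exp_partial n (of_real k * z)) powr R
        \<le> (1 + \<epsilon>) powr (P + R) / (1 - \<epsilon>)^2 * a" by (simp add: a_def \<epsilon>_def)
    also have "\<dots> \<le> E * (a + b)" using F E1 ab by (intro mult_mono) auto
    finally show ?thesis by (simp add: E_def \<epsilon>_def a_def b_def)
  next
    case False
    have "cmod (exp_partial n (of_real (k - 1) * z)) powr P * cmod (exp_partial n (of_real k * z)) powr R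
        \<le> b" unfolding b_def using False by (intro exp_partial_pair_le_large[OF k n P R PRr c]) simp
    also have "\<dots> \<le> 1 * (a + b)" using ab by simp
    also have "\<dots> \<le> E * (a + b)" using E1 ab by (intro mult_right_mono) auto
    finally show ?thesis by (simp add: E_def \<epsilon>_def a_def b_def)
  qed
qed

section \<open>The parameters alpha, J and ell\<close>

lemma ln_ln_ge:
  fixes a T :: real
  assumes "exp (exp a) \<le> T"
  shows "a \<le> ln (ln T)"
proof -
  have "exp a \<le> ln T"
    using ln_le_cancel_iff[of "exp (exp a)" T] assms exp_gt_zero[of "exp a"] by simp
  then show ?thesis using ln_le_cancel_iff[of "exp a" "ln T"] exp_gt_zero[of a] by simp
qed

lemma alpha_eq: "j \<ge> 1 \<Longrightarrow> alpha T j = 20^(j - 1) / (ln (ln T))^2"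
  by (simp add: alpha_def)

lemma finite_alpha_le:
  assumes L: "ln (ln T) \<noteq> 0"
  shows "finite {j. alpha T j \<le> B}"
proof (rule finite_subset)
  show "{j. alpha T j \<le> B} \<subseteq> {..nat \<lceil>1 + (ln (ln T))^2 * B\<rceil>}"
  proof
    fix j assume "j \<in> {j. alpha T j \<le> B}"
    then have jB: "alpha T j \<le> B" by simp
    show "j \<in> {..nat \<lceil>1 + (ln (ln T))^2 * B\<rceil>}"
    proof (cases "j \<ge> 1")
      case True
      have "real (j - 1) \<le> 2^(j - 1)"
        using less_exp[of "j - 1"] by (metis less_imp_le of_nat_le_iff of_nat_numeral of_nat_power)
      also have "(2::real)^(j - 1) \<le> 20^(j - 1)" by (intro power_mono) auto
      also have "\<dots> \<le> (ln (ln T))^2 * B"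
        using jB alpha_eq[OF True, of T] L by (simp add: divide_le_eq mult.commute)
      finally show ?thesis using True by (simp add: of_nat_diff le_nat_iff le_ceiling_iff)
    qed simp
  qed
qed simp

lemma alpha_mul_power_JJ_le:
  assumes L: "max 1 (10 powr M) \<le> ln (ln T)" and j: "j \<in> {1..JJ T M}"
  shows "alpha T j * 20^(JJ T M - j) \<le> 20 * 10 powr (-M)"
proof -
  define S where "S = {j. alpha T j \<le> 10 powr (-M)}"
  have "10 powr M \<le> ln (ln T) * 1" using L by simp
  also have "\<dots> \<le> (ln (ln T))^2" using L by (simp add: power2_eq_square mult_left_mono)
  finally have "1 / (ln (ln T))^2 \<le> 1 / 10 powr M"
    using L by (intro divide_left_mono) (auto intro!: mult_pos_pos)
  then have "1 \<in> S" by (simp add: S_def alpha_eq powr_minus divide_inverse)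
  moreover have "finite S" unfolding S_def using L by (intro finite_alpha_le) auto
  ultimately have max_in: "Max S \<in> S" and max_ge: "1 \<le> Max S" by (auto intro: Max_in Max_ge)
  have J: "JJ T M = 1 + Max S" by (simp add: JJ_def S_def)
  have "alpha T j * 20^(JJ T M - j) = 20^((j - 1) + (JJ T M - j)) / (ln (ln T))^2"
    by (subst power_add) (use j in \<open>simp add: alpha_eq\<close>)
  also have "(j - 1) + (JJ T M - j) = Suc (Max S - 1)" using j J max_ge by auto
  also have "20^Suc (Max S - 1) / (ln (ln T))^2 = 20 * (20^(Max S - 1) / (ln (ln T))^2)" by simp
  also have "\<dots> = 20 * alpha T (Max S)" using alpha_eq[OF max_ge] by simp
  also have "\<dots> \<le> 20 * 10 powr (-M)" using max_in by (simp add: S_def)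
  finally show ?thesis .
qed

lemma one_plus_le_powr_20: "1 + real i \<le> ((20::real)^i) powr (3/4)"
proof -
  define b where "b = (20::real) powr (3/4)"
  have "b^4 = 20 powr (real 4 * (3/4))" unfolding b_def by (rule powr_power) simp
  also have "\<dots> = 20^3" by (simp add: powr_realpow[symmetric])
  finally have b4: "b^4 = 8000" by simp
  have b2: "2 \<le> b"
  proof (rule ccontr)
    assume "\<not> 2 \<le> b"
    then have "b^4 < 2^4" by (intro power_strict_mono) (auto simp: b_def)
    then show False using b4 by simp
  qed
  have "1 + real i \<le> 2^i"
    using less_exp[of i] by (metis Suc_le_eq add.commute of_nat_Suc of_nat_le_iff of_nat_numeral of_nat_power)
  also have "(2::real)^i \<le> b^i" using b2 by (intro power_mono) auto
  also have "b^i = ((20::real)^i) powr (3/4)"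
    by (simp add: b_def powr_realpow[symmetric] powr_powr mult.commute)
  finally show ?thesis .
qed

lemma ell_ge_linear:
  assumes k: "k > 0" and L: "max 1 (10 powr M) \<le> ln (ln T)" and j: "j \<in> {1..JJ T M}"
  shows "exp 2 * k * (20 * 10 powr (-M)) powr (-3/4) * (1 + real (JJ T M - j)) \<le> ell k T j"
proof -
  define \<gamma> where "\<gamma> = 20 * 10 powr (-M)"
  define i where "i = JJ T M - j"
  have apos: "alpha T j > 0" using j L by (simp add: alpha_eq)
  have "alpha T j \<le> \<gamma> / 20^i"
    using alpha_mul_power_JJ_le[OF L j] by (simp add: le_divide_eq i_def \<gamma>_def)
  then have "(\<gamma> / 20^i) powr (-3/4) \<le> alpha T j powr (-3/4)"
    using apos by (intro powr_mono2') auto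
  moreover have "(\<gamma> / 20^i) powr (-3/4) = \<gamma> powr (-3/4) * ((20::real)^i) powr (3/4)"
  proof -
    have "(-3/4::real) = -(3/4)" by simp
    then have "((20::real)^i) powr (-3/4) = inverse (((20::real)^i) powr (3/4))"
      by (simp only: powr_minus)
    moreover have "(\<gamma> / 20^i) powr (-3/4) = \<gamma> powr (-3/4) / ((20::real)^i) powr (-3/4)"
      by (rule powr_divide)
    ultimately show ?thesis by (simp only: divide_inverse inverse_inverse_eq)
  qed
  moreover have "\<gamma> powr (-3/4) * (1 + real i) \<le> \<gamma> powr (-3/4) * ((20::real)^i) powr (3/4)"
    using one_plus_le_powr_20[of i] by (intro mult_left_mono) auto
  ultimately have "\<gamma> powr (-3/4) * (1 + real i) \<le> alpha T j powr (-3/4)" by linarith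
  from mult_left_mono[OF this, of "exp 2 * k"] k show ?thesis
    by (simp add: ell_def i_def \<gamma>_def mult.assoc)
qed

lemma sum_exp_ceil_ell_le:
  assumes k: "k > 0" and L: "max 1 (10 powr M) \<le> ln (ln T)"
  defines "x \<equiv> exp (- (exp 2 * k * (20 * 10 powr (-M)) powr (-3/4) / 2))"
  shows "(\<Sum>j=1..JJ T M. exp (- (real (nat \<lceil>ell k T j\<rceil>) / 2))) \<le> (\<Sum>i. x^(Suc i))"
proof -
  define J where "J = JJ T M"
  define c0 where "c0 = exp 2 * k * (20 * 10 powr (-M)) powr (-3/4)"
  have x: "0 < x" "x < 1" using k by (simp_all add: x_def)
  have "(\<Sum>j=1..J. exp (- (real (nat \<lceil>ell k T j\<rceil>) / 2))) \<le> (\<Sum>j=1..J. x^(Suc (J - j)))"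
  proof (rule sum_mono)
    fix j assume j: "j \<in> {1..J}"
    have "c0 * (1 + real (J - j)) \<le> real (nat \<lceil>ell k T j\<rceil>)"
      using ell_ge_linear[OF k L, of j] j by (simp add: c0_def J_def) linarith
    then have "exp (- (real (nat \<lceil>ell k T j\<rceil>) / 2)) \<le> exp (real (Suc (J - j)) * (- (c0 / 2)))"
      by (simp add: algebra_simps)
    also have "\<dots> = x^(Suc (J - j))" unfolding x_def c0_def by (rule exp_of_nat_mult)
    finally show "exp (- (real (nat \<lceil>ell k T j\<rceil>) / 2)) \<le> x^(Suc (J - j))" .
  qed
  also have "\<dots> = (\<Sum>i\<in>(\<lambda>j. J - j) ` {1..J}. x^(Suc i))"
    by (subst sum.reindex) (auto simp: inj_on_def)
  also have "\<dots> \<le> (\<Sum>i. x^(Suc i))"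
    using x summable_mult[OF summable_geometric[of x], of x]
    by (intro sum_le_suminf) (auto simp: mult.commute)
  finally show ?thesis by (simp add: J_def)
qed

section \<open>Pointwise bound for the mollifier\<close>

lemma PP_cnj: "PP T j (cnj s) = cnj (PP T j s)"
proof -
  have "(of_nat p :: complex) powr (- cnj s) = cnj ((of_nat p :: complex) powr (- s))" for p :: nat
    using cnj_powr[of "of_nat p :: complex" "- s"] by simp
  then show ?thesis by (simp add: PP_def)
qed

lemma NNj_eq_exp_partial: "NNj T k j s a = exp_partial (nat \<lceil>ell k T j\<rceil>) (of_real a * PP T j s)"
  by (simp add: NNj_def EE_def exp_partial_def)

lemma norm_NNj_cnj: "cmod (NNj T k j (cnj s) a) = cmod (NNj T k j s a)"
proof -
  have "NNj T k j (cnj s) a = cnj (NNj T k j s a)"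
    by (simp add: NNj_eq_exp_partial PP_cnj exp_partial_def)
  then show ?thesis by simp
qed

lemma NNj_powr_product_le:
  fixes k P R :: real
  assumes k: "k > 0" and P: "P \<ge> 0" and R: "R \<ge> 0"
    and PR: "P * (k - 1) + R * k = 2 * k" and PRr: "P + R \<le> 2 * real (rk k)" and ell: "0 < ell k T j"
  shows "cmod (NNj T k j \<rho> (k - 1)) powr P * cmod (NNj T k j (cnj \<rho>) k) powr R
     \<le> exp ((P + R + 6) * exp (- (nat \<lceil>ell k T j\<rceil> / 2)))
        * ((cmod (NNj T k j \<rho> k))^2 + (cmod (QQ T k j \<rho>))^(2 * rk k))"
proof -
  define n where "n = nat \<lceil>ell k T j\<rceil>"
  have n: "n \<ge> 1" using ell by (simp add: n_def le_nat_iff)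
  have "of_int \<lceil>ell k T j\<rceil> = (of_nat n :: complex)" using ell by (simp add: n_def)
  then have "QQ T k j \<rho> = (of_real (64 * max 2 (k + 3/2)) * PP T j \<rho> / of_nat n)^n"
    by (simp add: QQ_def n_def)
  moreover have "27 * max 1 k \<le> 64 * max 2 (k + 3/2)" by (simp add: max_def)
  ultimately show ?thesis
    unfolding norm_NNj_cnj
    using exp_partial_pair_le[OF k n P R PR PRr, of "64 * max 2 (k + 3/2)" "PP T j \<rho>"]
    by (simp add: NNj_eq_exp_partial n_def)
qed

lemma NN_powr_product_bound:
  fixes k P R M :: real
  assumes k: "k > 0" and P: "P \<ge> 0" and R: "R \<ge> 0"
    and PR: "P * (k - 1) + R * k = 2 * k" and PRr: "P + R \<le> 2 * real (rk k)"
  shows "\<exists>K>0. \<forall>T \<ge> exp (exp (max 1 (10 powr M))). \<forall>\<rho>.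
     cmod (NN T M k \<rho> (k - 1)) powr P * cmod (NN T M k (cnj \<rho>) k) powr R
       \<le> K * (\<Prod>i=1..JJ T M. (cmod (NNj T k i \<rho> k))^2 + (cmod (QQ T k i \<rho>))^(2 * rk k))"
proof (intro exI conjI allI impI)
  define x where "x = exp (- (exp 2 * k * (20 * 10 powr (-M)) powr (-3/4) / 2))"
  show "0 < exp ((P + R + 6) * (\<Sum>i. x^(Suc i)))" by simp
  fix T :: real and \<rho> :: complex
  assume "exp (exp (max 1 (10 powr M))) \<le> T"
  then have L: "max 1 (10 powr M) \<le> ln (ln T)" by (rule ln_ln_ge)
  define \<epsilon> where "\<epsilon> j = exp (- (nat \<lceil>ell k T j\<rceil> / 2))" for j
  define D where "D j = (cmod (NNj T k j \<rho> k))^2 + (cmod (QQ T k j \<rho>))^(2 * rk k)" for j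
  have D0: "D j \<ge> 0" for j by (simp add: D_def)
  have factor: "cmod (NNj T k j \<rho> (k - 1)) powr P * cmod (NNj T k j (cnj \<rho>) k) powr R
      \<le> exp ((P + R + 6) * \<epsilon> j) * D j" if j: "j \<in> {1..JJ T M}" for j
  proof -
    have "0 < exp 2 * k * (20 * 10 powr (-M)) powr (-3/4) * (1 + real (JJ T M - j))"
      using k by simp
    then have "0 < ell k T j" using ell_ge_linear[OF k L j] by linarith
    then show ?thesis unfolding \<epsilon>_def D_def by (rule NNj_powr_product_le[OF k P R PR PRr])
  qed
  have "cmod (NN T M k \<rho> (k - 1)) powr P * cmod (NN T M k (cnj \<rho>) k) powr R
      = (\<Prod>j=1..JJ T M. cmod (NNj T k j \<rho> (k - 1)) powr P * cmod (NNj T k j (cnj \<rho>) k) powr R)"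
    by (simp add: NN_def prod_norm[symmetric] prod_powr_distrib prod.distrib)
  also have "\<dots> \<le> (\<Prod>j=1..JJ T M. exp ((P + R + 6) * \<epsilon> j) * D j)"
    using factor by (intro prod_mono) auto
  also have "\<dots> = exp ((P + R + 6) * (\<Sum>j=1..JJ T M. \<epsilon> j)) * (\<Prod>j=1..JJ T M. D j)"
    by (simp add: prod.distrib exp_sum sum_distrib_left)
  also have "\<dots> \<le> exp ((P + R + 6) * (\<Sum>i. x^(Suc i))) * (\<Prod>j=1..JJ T M. D j)"
    using sum_exp_ceil_ell_le[OF k L] P R
    by (intro mult_right_mono prod_nonneg D0) (auto simp: \<epsilon>_def x_def)
  finally show "cmod (NN T M k \<rho> (k - 1)) powr P * cmod (NN T M k (cnj \<rho>) k) powr R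
      \<le> exp ((P + R + 6) * (\<Sum>i. x^(Suc i))) *
        (\<Prod>i=1..JJ T M. (cmod (NNj T k i \<rho> k))^2 + (cmod (QQ T k i \<rho>))^(2 * rk k))"
    by (simp add: D_def)
qed

section \<open>From the pointwise bound to sums over zeros\<close>

lemma weighted_sum_powr_interpolation:
  fixes w a b :: "'a \<Rightarrow> real"
  assumes fin: "finite I" and w: "\<And>i. i \<in> I \<Longrightarrow> w i \<ge> 0"
    and a: "\<And>i. i \<in> I \<Longrightarrow> a i \<ge> 0" and b: "\<And>i. i \<in> I \<Longrightarrow> b i \<ge> 0"
    and \<theta>: "0 < \<theta>" "\<theta> < 1"
  shows "(\<Sum>i\<in>I. w i * (a i powr (1 - \<theta>) * b i powr \<theta>))
     \<le> (\<Sum>i\<in>I. w i * a i) powr (1 - \<theta>) * (\<Sum>i\<in>I. w i * b i) powr \<theta>"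
proof -
  have "(\<Sum>i\<in>I. w i * (a i powr (1 - \<theta>) * b i powr \<theta>))
      \<le> (\<Sum>i\<in>I. w i * (a i powr (1 - \<theta>)) powr (1 / (1 - \<theta>))) powr (1 / (1 / (1 - \<theta>)))
        * (\<Sum>i\<in>I. w i * (b i powr \<theta>) powr (1 / \<theta>)) powr (1 / (1 / \<theta>))"
    using \<theta> w by (intro Hoelder_inequality_weighted_sum[OF fin]) (auto simp: field_simps)
  also have "\<dots> = (\<Sum>i\<in>I. w i * a i) powr (1 - \<theta>) * (\<Sum>i\<in>I. w i * b i) powr \<theta>"
    using \<theta> a b by (simp add: powr_powr)
  finally show ?thesis .
qed

lemma weighted_sum_Hoelder_le_half:
  fixes Z :: "'a set" and w d u v D :: "'a \<Rightarrow> real" and k K :: real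
  assumes k: "0 < k" "k \<le> 1/2" and K: "K > 0"
    and nn: "\<And>x. w x \<ge> 0" "\<And>x. d x \<ge> 0" "\<And>x. u x \<ge> 0" "\<And>x. v x \<ge> 0"
    and pw: "\<And>x. x \<in> Z \<Longrightarrow> u x powr 2 * v x powr (2/k) \<le> K * D x"
  shows "(\<Sum>x\<in>Z. w x * (d x * u x * v x)) \<le>
     K powr (k/2) * (\<Sum>x\<in>Z. w x * d x powr (2*k)) powr (1/2) *
       (\<Sum>x\<in>Z. w x * ((d x)^2 * (u x)^2)) powr ((1-k)/2) * (\<Sum>x\<in>Z. w x * D x) powr (k/2)"
proof (cases "finite Z")
  case False
  then show ?thesis by simp
next
  case fin: True
  define g where "g x = (d x * u x) powr (1 - k) * u x powr k * v x" for x
  define A where "A = (\<Sum>x\<in>Z. w x * d x powr (2*k))"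
  define B where "B = (\<Sum>x\<in>Z. w x * ((d x)^2 * (u x)^2))"
  define X where "X = (\<Sum>x\<in>Z. w x * D x)"
  define Y where "Y = (\<Sum>x\<in>Z. w x * (u x powr 2 * v x powr (2/k)))"
  have A0: "A \<ge> 0" and B0: "B \<ge> 0" and Y0: "Y \<ge> 0"
    unfolding A_def B_def Y_def using nn by (auto intro!: sum_nonneg)
  have "Y \<le> (\<Sum>x\<in>Z. w x * (K * D x))"
    unfolding Y_def using pw nn by (intro sum_mono mult_left_mono) auto
  then have YX: "Y \<le> K * X" by (simp add: X_def sum_distrib_left mult_ac)
  have X0: "X \<ge> 0" using YX Y0 K by (smt (verit) zero_le_mult_iff)
  have split: "d x * u x * v x = d x powr k * g x" for x
  proof (cases "d x = 0 \<or> u x = 0")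
    case False
    then have "d x > 0" "u x > 0" using nn by (auto simp: less_le)
    then have "d x powr k * g x = (d x powr k * d x powr (1 - k)) * (u x powr (1 - k) * u x powr k) * v x"
      by (simp add: g_def powr_mult mult_ac)
    also have "\<dots> = d x * u x * v x" using \<open>d x > 0\<close> \<open>u x > 0\<close> by (simp add: powr_add[symmetric])
    finally show ?thesis by simp
  qed (use k in \<open>auto simp: g_def\<close>)
  have g_sq: "g x powr 2 = ((d x)^2 * (u x)^2) powr (1 - k) * (u x powr 2 * v x powr (2/k)) powr k" for x
  proof -
    have "g x powr 2 = (d x * u x) powr (2 * (1 - k)) * (u x powr (2 * k) * v x powr 2)"
      by (simp add: g_def powr_mult powr_powr mult_ac)
    also have "(d x * u x) powr (2 * (1 - k)) = ((d x * u x) powr 2) powr (1 - k)"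
      by (simp only: powr_powr)
    also have "(d x * u x) powr 2 = (d x)^2 * (u x)^2" using nn by (simp add: power_mult_distrib)
    also have "u x powr (2 * k) * v x powr 2 = (u x powr 2 * v x powr (2/k)) powr k"
      using k by (simp add: powr_mult powr_powr)
    finally show ?thesis .
  qed
  define G where "G = (\<Sum>x\<in>Z. w x * g x powr 2)"
  \<comment> \<open>Cauchy-Schwarz splits off d^k; Hoelder with exponents 1/(1-k), 1/k handles the rest.\<close>
  have "G \<le> B powr (1 - k) * Y powr k"
    unfolding G_def g_sq B_def Y_def using nn k by (intro weighted_sum_powr_interpolation[OF fin]) auto
  also have "\<dots> \<le> B powr (1 - k) * (K * X) powr k"
    using YX Y0 B0 k by (intro mult_left_mono powr_mono2) auto
  finally have GX: "G powr (1/2) \<le> (B powr (1 - k) * (K * X) powr k) powr (1/2)"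
    using nn by (intro powr_mono2) (auto simp: G_def intro!: sum_nonneg)
  have "(\<Sum>x\<in>Z. w x * (d x * u x * v x))
      \<le> (\<Sum>x\<in>Z. w x * (d x powr k) powr 2) powr (1/2) * G powr (1/2)"
    unfolding split G_def using nn by (intro Hoelder_inequality_weighted_sum[OF fin]) (auto simp: g_def)
  also have "(\<Sum>x\<in>Z. w x * (d x powr k) powr 2) = A" by (simp add: A_def powr_powr mult.commute)
  also have "A powr (1/2) * G powr (1/2) \<le> A powr (1/2) * (B powr (1 - k) * (K * X) powr k) powr (1/2)"
    using GX by (rule mult_left_mono) simp
  also have "\<dots> = K powr (k/2) * A powr (1/2) * B powr ((1-k)/2) * X powr (k/2)"
    using K X0 A0 B0 by (simp add: powr_mult powr_powr mult_ac)
  finally show ?thesis by (simp add: A_def B_def X_def)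
qed

lemma weighted_sum_Hoelder_gt_half:
  fixes Z :: "'a set" and w d u v D :: "'a \<Rightarrow> real" and k K :: real
  assumes k: "k > 1/2" and K: "K > 0"
    and nn: "\<And>x. w x \<ge> 0" "\<And>x. d x \<ge> 0" "\<And>x. u x \<ge> 0" "\<And>x. v x \<ge> 0"
    and pw: "\<And>x. x \<in> Z \<Longrightarrow> u x powr (2*k/(2*k-1)) * v x powr (2*k/(2*k-1)) \<le> K * D x"
  shows "(\<Sum>x\<in>Z. w x * (d x * u x * v x)) \<le>
     K powr ((2*k-1)/(2*k)) * (\<Sum>x\<in>Z. w x * d x powr (2*k)) powr (1/(2*k)) *
       (\<Sum>x\<in>Z. w x * D x) powr ((2*k-1)/(2*k))"
proof (cases "finite Z")
  case False
  then show ?thesis by simp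
next
  case fin: True
  define q where "q = 2*k/(2*k-1)"
  have q1: "q > 1" using k by (simp add: q_def field_simps)
  have pq: "1/(2*k) + 1/q = 1" using k by (simp add: q_def field_simps)
  have iq: "1/q = (2*k-1)/(2*k)" using k by (simp add: q_def)
  define A where "A = (\<Sum>x\<in>Z. w x * d x powr (2*k))"
  define X where "X = (\<Sum>x\<in>Z. w x * D x)"
  define Y where "Y = (\<Sum>x\<in>Z. w x * (u x * v x) powr q)"
  have Y0: "Y \<ge> 0" unfolding Y_def using nn by (intro sum_nonneg) auto
  have "Y \<le> (\<Sum>x\<in>Z. w x * (K * D x))"
    unfolding Y_def using pw nn by (intro sum_mono mult_left_mono) (auto simp: powr_mult q_def)
  then have YX: "Y \<le> K * X" by (simp add: X_def sum_distrib_left mult_ac)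
  have X0: "X \<ge> 0" using YX Y0 K by (smt (verit) zero_le_mult_iff)
  have "(\<Sum>x\<in>Z. w x * (d x * u x * v x)) = (\<Sum>x\<in>Z. w x * (d x * (u x * v x)))"
    by (simp add: mult_ac)
  also have "\<dots> \<le> A powr (1/(2*k)) * Y powr (1/q)"
    unfolding A_def Y_def using Hoelder_inequality_weighted_sum[OF fin, of w d "\<lambda>x. u x * v x" "2*k" q] nn q1 pq k
    by simp
  also have "\<dots> \<le> A powr (1/(2*k)) * (K * X) powr (1/q)"
    using YX Y0 q1 by (intro mult_left_mono powr_mono2) (auto simp: A_def intro!: sum_nonneg mult_nonneg_nonneg nn)
  also have "\<dots> = K powr ((2*k-1)/(2*k)) * A powr (1/(2*k)) * X powr ((2*k-1)/(2*k))"
    using K X0 by (simp add: powr_mult iq mult_ac)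
  finally show ?thesis by (simp add: A_def X_def)
qed

lemma zero_sum_Hoelder_le_half:
  fixes d u v D :: "complex \<Rightarrow> real" and k K :: real
  assumes "0 < k" "k \<le> 1/2" and "K > 0"
    and "\<And>\<rho>. d \<rho> \<ge> 0" "\<And>\<rho>. u \<rho> \<ge> 0" "\<And>\<rho>. v \<rho> \<ge> 0"
    and "\<And>\<rho>. u \<rho> powr 2 * v \<rho> powr (2/k) \<le> K * D \<rho>"
  shows "zero_sum T (\<lambda>\<rho>. d \<rho> * u \<rho> * v \<rho>) \<le>
     K powr (k/2) * zero_sum T (\<lambda>\<rho>. d \<rho> powr (2*k)) powr (1/2) *
       zero_sum T (\<lambda>\<rho>. (d \<rho>)^2 * (u \<rho>)^2) powr ((1-k)/2) * zero_sum T D powr (k/2)"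
  unfolding zero_sum_def using assms by (intro weighted_sum_Hoelder_le_half) auto

lemma zero_sum_Hoelder_gt_half:
  fixes d u v D :: "complex \<Rightarrow> real" and k K :: real
  assumes "k > 1/2" and "K > 0"
    and "\<And>\<rho>. d \<rho> \<ge> 0" "\<And>\<rho>. u \<rho> \<ge> 0" "\<And>\<rho>. v \<rho> \<ge> 0"
    and "\<And>\<rho>. u \<rho> powr (2*k/(2*k-1)) * v \<rho> powr (2*k/(2*k-1)) \<le> K * D \<rho>"
  shows "zero_sum T (\<lambda>\<rho>. d \<rho> * u \<rho> * v \<rho>) \<le>
     K powr ((2*k-1)/(2*k)) * zero_sum T (\<lambda>\<rho>. d \<rho> powr (2*k)) powr (1/(2*k)) *
       zero_sum T D powr ((2*k-1)/(2*k))"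
  unfolding zero_sum_def using assms by (intro weighted_sum_Hoelder_gt_half) auto

lemma norm_zero_sum_le:
  fixes f :: "complex \<Rightarrow> 'a::real_normed_div_algebra"
  shows "norm (zero_sum T f) \<le> zero_sum T (\<lambda>\<rho>. norm (f \<rho>))"
  unfolding zero_sum_def by (rule order_trans[OF norm_sum]) (simp add: norm_mult)

lemma rk_le_half: "k \<le> 1/2 \<Longrightarrow> 2 + 2/k \<le> 2 * real (rk k)"
  unfolding rk_def by simp linarith

lemma rk_gt_half: "k > 1/2 \<Longrightarrow> 2*k/(2*k-1) + 2*k/(2*k-1) \<le> 2 * real (rk k)"
  unfolding rk_def by simp linarith

lemma norm_zero_sum_NN_le:
  "norm (zero_sum T (\<lambda>\<rho>. deriv zeta \<rho> * NN T M k \<rho> (k - 1) * NN T M k (cnj \<rho>) k))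
    \<le> zero_sum T (\<lambda>\<rho>. norm (deriv zeta \<rho>) * norm (NN T M k \<rho> (k - 1)) * norm (NN T M k (cnj \<rho>) k))"
  using norm_zero_sum_le[of T "\<lambda>\<rho>. deriv zeta \<rho> * NN T M k \<rho> (k - 1) * NN T M k (cnj \<rho>) k"]
  by (simp add: norm_mult)

lemma zero_sum_NN_bound_le_half:
  fixes k M :: real
  assumes k: "0 < k" "k \<le> 1/2"
  shows "\<exists>C>0. \<exists>T0. \<forall>T\<ge>T0.
    norm (zero_sum T (\<lambda>\<rho>. deriv zeta \<rho> * NN T M k \<rho> (k - 1) * NN T M k (cnj \<rho>) k))
    \<le> C * zero_sum T (\<lambda>\<rho>. norm (deriv zeta \<rho>) powr (2 * k)) powr (1/2)
        * zero_sum T (\<lambda>\<rho>. (norm (deriv zeta \<rho>))^2 * (norm (NN T M k \<rho> (k - 1)))^2) powr ((1 - k) / 2)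
        * zero_sum T (\<lambda>\<rho>. \<Prod>i = 1..JJ T M.
            (norm (NNj T k i \<rho> k))^2 + (norm (QQ T k i \<rho>))^(2 * rk k)) powr (k / 2)"
proof -
  obtain K where "K > 0" and K: "\<forall>T \<ge> exp (exp (max 1 (10 powr M))). \<forall>\<rho>.
      cmod (NN T M k \<rho> (k - 1)) powr 2 * cmod (NN T M k (cnj \<rho>) k) powr (2/k)
      \<le> K * (\<Prod>i=1..JJ T M. (cmod (NNj T k i \<rho> k))^2 + (cmod (QQ T k i \<rho>))^(2 * rk k))"
  proof (rule NN_powr_product_bound[OF k(1) _ _ _ rk_le_half[OF k(2)], THEN exE])
    show "2 * (k - 1) + 2 / k * k = 2 * k" using k by simp
  qed (use k in auto)
  then show ?thesis
    by (intro exI[of _ "K powr (k/2)"] conjI exI[of _ "exp (exp (max 1 (10 powr M)))"] allI impI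
        order_trans[OF norm_zero_sum_NN_le zero_sum_Hoelder_le_half[OF k \<open>K > 0\<close>]]) auto
qed

lemma zero_sum_NN_bound_gt_half:
  fixes k M :: real
  assumes k: "k > 1/2"
  shows "\<exists>C>0. \<exists>T0. \<forall>T\<ge>T0.
    norm (zero_sum T (\<lambda>\<rho>. deriv zeta \<rho> * NN T M k \<rho> (k - 1) * NN T M k (cnj \<rho>) k))
    \<le> C * zero_sum T (\<lambda>\<rho>. norm (deriv zeta \<rho>) powr (2 * k)) powr (1 / (2 * k))
        * zero_sum T (\<lambda>\<rho>. \<Prod>i = 1..JJ T M.
            (norm (NNj T k i \<rho> k))^2 + (norm (QQ T k i \<rho>))^(2 * rk k)) powr ((2 * k - 1) / (2 * k))"
proof -
  obtain K where "K > 0" and K: "\<forall>T \<ge> exp (exp (max 1 (10 powr M))). \<forall>\<rho>.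
      cmod (NN T M k \<rho> (k - 1)) powr (2*k/(2*k-1)) * cmod (NN T M k (cnj \<rho>) k) powr (2*k/(2*k-1))
      \<le> K * (\<Prod>i=1..JJ T M. (cmod (NNj T k i \<rho> k))^2 + (cmod (QQ T k i \<rho>))^(2 * rk k))"
  proof (rule NN_powr_product_bound[OF _ _ _ _ rk_gt_half[OF k], THEN exE], goal_cases)
    case 4
    define q where "q = 2*k/(2*k-1)"
    have "q * (k - 1) + q * k = q * (2*k - 1)" by (simp add: algebra_simps)
    also have "\<dots> = 2 * k" using k by (simp add: q_def)
    finally show ?case by (simp only: q_def)
  qed (use k in \<open>auto simp: field_simps\<close>)
  then show ?thesis
    by (intro exI[of _ "K powr ((2*k-1)/(2*k))"] conjI exI[of _ "exp (exp (max 1 (10 powr M)))"]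
        allI impI order_trans[OF norm_zero_sum_NN_le zero_sum_Hoelder_gt_half[OF k \<open>K > 0\<close>]]) auto
qed

theorem lemma3p3:
  fixes k :: real
  assumes "RH" and "0 < k"
  shows "\<exists>M0. \<forall>M\<ge>M0. \<exists>C>0. \<exists>T0. \<forall>T\<ge>T0.
    (let S = zero_sum T (\<lambda>\<rho>. deriv zeta \<rho> * NN T M k \<rho> (k - 1) * NN T M k (cnj \<rho>) k);
         A = zero_sum T (\<lambda>\<rho>. norm (deriv zeta \<rho>) powr (2 * k));
         B = zero_sum T (\<lambda>\<rho>. (norm (deriv zeta \<rho>))^2 * (norm (NN T M k \<rho> (k - 1)))^2);
         D = zero_sum T (\<lambda>\<rho>. \<Prod>i = 1..JJ T M.
                 (norm (NNj T k i \<rho> k))^2 + (norm (QQ T k i \<rho>))^(2 * rk k))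
     in if k \<le> 1/2
        then norm S \<le> C * A powr (1/2) * B powr ((1 - k) / 2) * D powr (k / 2)
        else norm S \<le> C * A powr (1 / (2 * k)) * D powr ((2 * k - 1) / (2 * k)))"
proof (cases "k \<le> 1/2")
  case True
  show ?thesis
    using zero_sum_NN_bound_le_half[OF \<open>0 < k\<close> True] True unfolding Let_def by simp
next
  case False
  then show ?thesis using zero_sum_NN_bound_gt_half[of k] unfolding Let_def by simp
qed

end
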